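(* Let $d\ge1$, $D>0$, $\sigma\ge0$, $\alpha\in[0,1)$. Let $w^*\in\mathbb{R}^d$ with $\|w^*\|\le D$, and let $(x,\epsilon,b)$ be mutually independent random variables with $x\in\mathbb{R}^d$, $\|x\|\le1$ a.s., $\mathbb{E}[x]=0$, $\epsilon\in\mathbb{R}$, $|\epsilon|\le\sigma$ a.s., $\mathbb{E}\epsilon=0$, $b\in\mathbb{R}$, $\mathbb{P}(b\ne0)=\alpha$; set $y=\langle w^*,x\rangle+\epsilon+b$. Let $R=6D+\sigma$. Then for every $w\in\mathcal W$, $$F(w)-F(w^* )\le\frac1{1-\alpha}\big(L_R(w)-L_R(w^* )\big).$$
   Context: $\mathcal W=\{w\in\mathbb{R}^d:\|w\|\le D\}$. The Huber loss is $h_R(s)=\frac12s^2$ if $|s|\le R$ and $h_R(s)=R(|s|-\frac12R)$ otherwise. $L_R(w)=\mathbb{E}_{x,\epsilon,b}[h_R(\langle w,x\rangle-y)]$ is the expected Huber loss under the contaminated distribution, and $F(w)=\mathbb{E}_{x,\epsilon}\big[\tfrac12(\langle w,x\rangle-\langle w^*,x\rangle-\epsilon)^2\big]$ is the expected squared loss on uncorrupted data. *)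

theory Defs
  imports "HOL-Probability.Probability"
begin

definition huber :: "real \<Rightarrow> real \<Rightarrow> real" where
  "huber R s = (if \<bar>s\<bar> \<le> R then s\<^sup>2 / 2 else R * (\<bar>s\<bar> - R / 2))"

definition huber_risk ::
  "'a measure \<Rightarrow> ('a \<Rightarrow> 'd::euclidean_space) \<Rightarrow> ('a \<Rightarrow> real) \<Rightarrow> ('a \<Rightarrow> real)
     \<Rightarrow> 'd \<Rightarrow> real \<Rightarrow> 'd \<Rightarrow> real" where
  "huber_risk M X eps b wstar R w =
     (\<integral>\<omega>. huber R (w \<bullet> X \<omega> - (wstar \<bullet> X \<omega> + eps \<omega> + b \<omega>)) \<partial>M)"

definition sq_risk ::
  "'a measure \<Rightarrow> ('a \<Rightarrow> 'd::euclidean_space) \<Rightarrow> ('a \<Rightarrow> real) \<Rightarrow> 'd \<Rightarrow> 'd \<Rightarrow> real" where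
  "sq_risk M X eps wstar w =
     (\<integral>\<omega>. (w \<bullet> X \<omega> - wstar \<bullet> X \<omega> - eps \<omega>)\<^sup>2 / 2 \<partial>M)"

end

theory Submission
  imports Defs
begin

text \<open>Put \<open>z = \<langle>w - w\<^sup>*, x\<rangle>\<close>, so that \<open>\<bar>z\<bar> \<le> 2D\<close>, and let \<open>clip R\<close> be the derivative of
  \<open>h\<^sub>R\<close>. As \<open>x\<close> is centred and independent of \<open>\<epsilon>\<close>, \<open>F(w) - F(w\<^sup>*) = E[z\<^sup>2]/2\<close>.
  Pointwise, if \<open>b = 0\<close> both arguments \<open>z - \<epsilon>\<close> and \<open>-\<epsilon>\<close> of the Huber loss lie in its
  quadratic region because \<open>\<bar>z\<bar> + \<bar>\<epsilon>\<bar> \<le> R\<close>, so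
  \<open>h\<^sub>R(z - \<epsilon> - b) - h\<^sub>R(-\<epsilon> - b) = z\<^sup>2/2 - z clip R (\<epsilon> + b)\<close>; if \<open>b \<noteq> 0\<close>, convexity of \<open>h\<^sub>R\<close>
  still gives the lower bound \<open>- z clip R (\<epsilon> + b)\<close>. Taking expectations, the clipped term
  vanishes because \<open>x\<close> is centred and independent of \<open>(\<epsilon>, b)\<close>, and the indicator of
  \<open>b = 0\<close> is independent of \<open>z\<^sup>2\<close>, so \<open>L\<^sub>R(w) - L\<^sub>R(w\<^sup>*) \<ge> (1 - \<alpha>) E[z\<^sup>2]/2\<close>.\<close>

lemma measurable_sigma_iff_sigma_sets_vimage:
  assumes "E \<subseteq> Pow \<Omega>"
  shows "f \<in> measurable (sigma \<Omega> E) N \<longleftrightarrow>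
    f \<in> \<Omega> \<rightarrow> space N \<and> sigma_sets \<Omega> {f -` A \<inter> \<Omega> | A. A \<in> sets N} \<subseteq> sigma_sets \<Omega> E"
  using measurable_iff_sets[of f "sigma \<Omega> E" N] assms by (simp add: sets_vimage_algebra)

lemma Int_stable_vimage_sets: "Int_stable {f -` A \<inter> \<Omega> | A. A \<in> sets N}"
proof (rule Int_stableI, clarify)
  fix A B assume "A \<in> sets N" "B \<in> sets N"
  then show "\<exists>C. f -` A \<inter> \<Omega> \<inter> (f -` B \<inter> \<Omega>) = f -` C \<inter> \<Omega> \<and> C \<in> sets N"
    by (intro exI[of _ "A \<inter> B"]) auto
qed

lemma (in prob_space) indep_set_sigma_sets_Un:
  assumes indep: "indep_sets (\<lambda>i::nat. if i = 0 then A else if i = 1 then B else C) {0, 1, 2}"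
      (is "indep_sets ?E _")
    and "Int_stable A" "Int_stable B" "Int_stable C"
  shows "indep_set (sigma_sets (space M) A) (sigma_sets (space M) (B \<union> C))"
proof -
  let ?I = "\<lambda>j::nat. if j = 0 then {0::nat} else {1, 2}"
  have "indep_sets (\<lambda>j. sigma_sets (space M) (\<Union>i\<in>?I j. ?E i)) {0, 1}"
  proof (rule indep_sets_collect_sigma)
    have "(\<Union>j\<in>{0, 1}. ?I j) = {0, 1, 2}" by auto
    then show "indep_sets ?E (\<Union>j\<in>{0, 1}. ?I j)" using indep by simp
    show "Int_stable (?E i)" for i using assms(2-4) by simp
    show "disjoint_family_on ?I {0, 1}" by (simp add: disjoint_family_on_def)
  qed
  moreover have "(\<lambda>j. sigma_sets (space M) (\<Union>i\<in>?I j. ?E i))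
      = (\<lambda>j::nat. if j = 0 then sigma_sets (space M) A else sigma_sets (space M) (B \<union> C))"
    by (simp add: fun_eq_iff)
  ultimately have collected: "indep_sets (\<lambda>j::nat. if j = 0 then sigma_sets (space M) A
      else sigma_sets (space M) (B \<union> C)) {0, 1}"
    by (simp only:)
  show ?thesis
  proof (rule indep_setI)
    fix a c assume "a \<in> sigma_sets (space M) A" "c \<in> sigma_sets (space M) (B \<union> C)"
    then have "prob (\<Inter>j\<in>{0, 1::nat}. if j = 0 then a else c)
        = (\<Prod>j\<in>{0, 1::nat}. prob (if j = 0 then a else c))"
      by (intro indep_setsD[OF collected]) auto
    then show "prob (a \<inter> c) = prob a * prob c" by (simp add: Int_commute)
  qed (use collected in \<open>auto simp: indep_sets_def\<close>)
qed

text \<open>Both arguments of \<open>indep_var\<close> must take values in the same type, so the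
  independence of \<open>X\<close> from the pair \<open>(Y, Z)\<close> is expressed through functions of each.\<close>

lemma (in prob_space) indep_var_compose_Pair_of_indep_sets:
  assumes indep: "indep_sets (\<lambda>i::nat. if i = 0 then {X -` A \<inter> space M | A. A \<in> sets MX}
                      else if i = 1 then {Y -` A \<inter> space M | A. A \<in> sets MY}
                      else {Z -` A \<inter> space M | A. A \<in> sets MZ}) {0, 1, 2}"
    and rv: "X \<in> measurable M MX" "Y \<in> measurable M MY" "Z \<in> measurable M MZ"
    and f: "f \<in> measurable MX N" and g: "g \<in> measurable (MY \<Otimes>\<^sub>M MZ) N'"
  shows "indep_var N (\<lambda>\<omega>. f (X \<omega>)) N' (\<lambda>\<omega>. g (Y \<omega>, Z \<omega>))"
proof -
  define GX where "GX = {X -` A \<inter> space M | A. A \<in> sets MX}"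
  define GY where "GY = {Y -` A \<inter> space M | A. A \<in> sets MY}"
  define GZ where "GZ = {Z -` A \<inter> space M | A. A \<in> sets MZ}"
  have G_indep: "indep_set (sigma_sets (space M) GX) (sigma_sets (space M) (GY \<union> GZ))"
    unfolding GX_def GY_def GZ_def
    by (rule indep_set_sigma_sets_Un[OF indep]) (simp_all add: Int_stable_vimage_sets)
  have G_sub: "GX \<subseteq> Pow (space M)" "GY \<union> GZ \<subseteq> Pow (space M)"
    by (auto simp: GX_def GY_def GZ_def)
  have "X \<in> measurable (sigma (space M) GX) MX"
    using G_sub by (auto simp: measurable_sigma_iff_sigma_sets_vimage GX_def
        intro: measurable_space[OF rv(1)])
  then have "(\<lambda>\<omega>. f (X \<omega>)) \<in> measurable (sigma (space M) GX) N"
    using f by (rule measurable_compose)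
  then have fX_sub: "sigma_sets (space M) {(\<lambda>\<omega>. f (X \<omega>)) -` A \<inter> space M | A. A \<in> sets N}
      \<subseteq> sigma_sets (space M) GX"
    using G_sub by (simp add: measurable_sigma_iff_sigma_sets_vimage)
  have "Y \<in> measurable (sigma (space M) (GY \<union> GZ)) MY"
       "Z \<in> measurable (sigma (space M) (GY \<union> GZ)) MZ"
    using G_sub by (auto simp: measurable_sigma_iff_sigma_sets_vimage GY_def GZ_def
        intro: measurable_space[OF rv(2)] measurable_space[OF rv(3)] intro!: sigma_sets_mono')
  then have "(\<lambda>\<omega>. g (Y \<omega>, Z \<omega>)) \<in> measurable (sigma (space M) (GY \<union> GZ)) N'"
    using g by (intro measurable_compose[OF measurable_Pair])
  then have gYZ_sub: "sigma_sets (space M) {(\<lambda>\<omega>. g (Y \<omega>, Z \<omega>)) -` A \<inter> space M | A. A \<in> sets N'}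
      \<subseteq> sigma_sets (space M) (GY \<union> GZ)"
    using G_sub by (simp add: measurable_sigma_iff_sigma_sets_vimage)
  show ?thesis
    unfolding indep_var_eq indep_set_def
  proof
    show "random_variable N (\<lambda>\<omega>. f (X \<omega>)) \<and> random_variable N' (\<lambda>\<omega>. g (Y \<omega>, Z \<omega>))"
      using measurable_compose[OF rv(1) f] measurable_compose[OF measurable_Pair[OF rv(2,3)] g]
      by (simp add: comp_def)
    show "indep_sets (case_bool (sigma_sets (space M) {(\<lambda>\<omega>. f (X \<omega>)) -` A \<inter> space M | A. A \<in> sets N})
      (sigma_sets (space M) {(\<lambda>\<omega>. g (Y \<omega>, Z \<omega>)) -` A \<inter> space M | A. A \<in> sets N'})) UNIV"
      by (rule indep_sets_mono_sets[OF G_indep[unfolded indep_set_def]])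
         (use fX_sub gYZ_sub in \<open>simp split: bool.split\<close>)
  qed
qed

definition clip :: "real \<Rightarrow> real \<Rightarrow> real" where
  "clip R s = max (- R) (min R s)"

lemma clip_eq_self: "\<bar>s\<bar> \<le> R \<Longrightarrow> clip R s = s"
  by (simp add: clip_def)

lemma clip_minus: "0 \<le> R \<Longrightarrow> clip R (- s) = - clip R s"
  by (simp add: clip_def max_def min_def)

lemma abs_clip_le: "0 \<le> R \<Longrightarrow> \<bar>clip R s\<bar> \<le> R"
  by (simp add: clip_def)

lemma borel_measurable_clip[measurable]: "clip R \<in> borel_measurable borel"
  unfolding clip_def[abs_def] by measurable

lemma borel_measurable_huber[measurable]: "huber R \<in> borel_measurable borel"
  unfolding huber_def[abs_def] by measurable

lemma huber_nonneg: "0 \<le> R \<Longrightarrow> 0 \<le> huber R s"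
  by (auto simp: huber_def)

lemma huber_le_mult_abs:
  assumes "0 \<le> R"
  shows "huber R s \<le> R * \<bar>s\<bar>"
proof (cases "\<bar>s\<bar> \<le> R")
  case True
  then have "s\<^sup>2 \<le> R * \<bar>s\<bar>"
    by (metis abs_ge_zero mult_right_mono power2_eq_square power2_abs)
  moreover have "0 \<le> R * \<bar>s\<bar>" using assms by simp
  ultimately have "s\<^sup>2 / 2 \<le> R * \<bar>s\<bar>" by linarith
  with True show ?thesis by (simp add: huber_def)
next
  case False
  with assms show ?thesis by (simp add: huber_def algebra_simps)
qed

text \<open>The Huber loss is the convex conjugate of \<open>g\<^sup>2/2\<close> on \<open>\<bar>g\<bar> \<le> R\<close>: it is the
  supremum of the lines \<open>g * t - g\<^sup>2/2\<close> below, attained at the slope \<open>g = clip R t\<close>.\<close>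

lemma huber_ge_tangent:
  assumes "\<bar>g\<bar> \<le> R"
  shows "g * t - g\<^sup>2 / 2 \<le> huber R t"
proof (cases "\<bar>t\<bar> \<le> R")
  case True
  have "0 \<le> (t - g)\<^sup>2 / 2" by simp
  with True show ?thesis by (simp add: huber_def power2_diff field_simps)
next
  case False
  have "g * t \<le> \<bar>g\<bar> * \<bar>t\<bar>" by (metis abs_ge_self abs_mult)
  moreover have "0 \<le> R * \<bar>t\<bar> - \<bar>g\<bar> * \<bar>t\<bar> - (R\<^sup>2 - g\<^sup>2) / 2"
  proof -
    have "0 \<le> (R - \<bar>g\<bar>) * (\<bar>t\<bar> - (R + \<bar>g\<bar>) / 2)"
      using False assms by (intro mult_nonneg_nonneg) auto
    also have "\<dots> = R * \<bar>t\<bar> - \<bar>g\<bar> * \<bar>t\<bar> - (R\<^sup>2 - g\<^sup>2) / 2"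
      by (simp add: algebra_simps power2_eq_square)
    finally show ?thesis .
  qed
  moreover have "huber R t = R * \<bar>t\<bar> - R\<^sup>2 / 2"
    using False by (simp add: huber_def algebra_simps power2_eq_square)
  ultimately show ?thesis by argo
qed

lemma huber_eq_tangent_clip:
  assumes "0 \<le> R"
  shows "huber R t = clip R t * t - (clip R t)\<^sup>2 / 2"
  using assms by (auto simp: huber_def clip_def power2_eq_square abs_if algebra_simps)

lemma huber_subgradient:
  assumes "0 \<le> R"
  shows "huber R u + clip R u * (t - u) \<le> huber R t"
  using huber_ge_tangent[of "clip R u" R t] huber_eq_tangent_clip[OF assms, of u]
    abs_clip_le[OF assms] by (simp add: algebra_simps)

lemma huber_increment_ge:
  assumes "\<bar>z\<bar> + \<bar>e\<bar> \<le> R"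
  shows "(if c = 0 then z\<^sup>2 / 2 else 0) - z * clip R (e + c) \<le> huber R (z - e - c) - huber R (- (e + c))"
proof (cases "c = 0")
  case True
  have "\<bar>z - e\<bar> \<le> R" "\<bar>e\<bar> \<le> R" using assms by auto
  with True show ?thesis by (simp add: huber_def clip_eq_self power2_diff field_simps)
next
  case False
  have "0 \<le> R" using assms by linarith
  then have "huber R (- (e + c)) - z * clip R (e + c) \<le> huber R (z - e - c)"
    using huber_subgradient[of R "- (e + c)" "z - e - c"] clip_minus[of R "e + c"] by (simp add: mult.commute)
  with False show ?thesis by simp
qed

lemma integrable_huber:
  assumes "0 \<le> R" and f: "integrable M f"
  shows "integrable M (\<lambda>x. huber R (f x))"
proof (rule Bochner_Integration.integrable_bound)
  show "integrable M (\<lambda>x. R * \<bar>f x\<bar>)" using f by auto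
  show "(\<lambda>x. huber R (f x)) \<in> borel_measurable M"
    using borel_measurable_integrable[OF f] by measurable
  show "AE x in M. norm (huber R (f x)) \<le> norm (R * \<bar>f x\<bar>)"
    using assms(1) by (simp add: huber_nonneg huber_le_mult_abs)
qed

lemma abs_inner_le_mult:
  assumes "norm v \<le> K" "norm x \<le> L"
  shows "\<bar>v \<bullet> x\<bar> \<le> K * L"
proof -
  have "\<bar>v \<bullet> x\<bar> \<le> norm v * norm x" by (rule Cauchy_Schwarz_ineq2)
  also have "\<dots> \<le> K * L"
    using assms order_trans[OF norm_ge_zero assms(1)] by (intro mult_mono) auto
  finally show ?thesis .
qed

lemma (in prob_space) integrable_bounded:
  fixes f :: "'a \<Rightarrow> real"
  assumes "AE x in M. \<bar>f x\<bar> \<le> K" "f \<in> borel_measurable M"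
  shows "integrable M f" "integrable M (\<lambda>x. (f x)\<^sup>2)"
proof -
  show "integrable M f" using assms by (intro integrable_const_bound[of _ K]) auto
  have "AE x in M. norm ((f x)\<^sup>2) \<le> K\<^sup>2"
    using assms(1) by eventually_elim (metis abs_ge_zero norm_power power_mono real_norm_def)
  then show "integrable M (\<lambda>x. (f x)\<^sup>2)"
    using assms(2) by (intro integrable_const_bound) auto
qed

lemma (in prob_space) integrable_bounded_pair:
  fixes z e :: "'a \<Rightarrow> real"
  assumes "AE \<omega> in M. \<bar>z \<omega>\<bar> + \<bar>e \<omega>\<bar> \<le> K" "random_variable borel z" "random_variable borel e"
  shows "integrable M z" "integrable M (\<lambda>\<omega>. (z \<omega>)\<^sup>2)"
    and "integrable M e" "integrable M (\<lambda>\<omega>. (e \<omega>)\<^sup>2)"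
proof -
  have "AE \<omega> in M. \<bar>z \<omega>\<bar> \<le> K \<and> \<bar>e \<omega>\<bar> \<le> K"
    using assms(1) by eventually_elim linarith
  then have "AE \<omega> in M. \<bar>z \<omega>\<bar> \<le> K" "AE \<omega> in M. \<bar>e \<omega>\<bar> \<le> K"
    by auto
  with assms(2,3) show "integrable M z" "integrable M (\<lambda>\<omega>. (z \<omega>)\<^sup>2)"
    and "integrable M e" "integrable M (\<lambda>\<omega>. (e \<omega>)\<^sup>2)"
    by (auto intro: integrable_bounded)
qed

lemma (in prob_space) expectation_if_one_zero:
  "expectation (\<lambda>\<omega>. if P \<omega> then 1 else 0 :: real) = prob {\<omega> \<in> space M. P \<omega>}"
proof -
  have "expectation (\<lambda>\<omega>. if P \<omega> then 1 else 0 :: real) = expectation (indicator {\<omega> \<in> space M. P \<omega>})"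
    by (rule Bochner_Integration.integral_cong) auto
  then show ?thesis by (simp add: Int_absorb2)
qed

lemma (in prob_space) integral_sq_diff_centered_indep:
  fixes z e :: "'a \<Rightarrow> real"
  assumes indep: "indep_var borel z borel e"
    and bounded: "AE \<omega> in M. \<bar>z \<omega>\<bar> + \<bar>e \<omega>\<bar> \<le> K"
    and centered: "expectation z = 0"
  shows "(\<integral>\<omega>. (z \<omega> - e \<omega>)\<^sup>2 / 2 \<partial>M) - (\<integral>\<omega>. (e \<omega>)\<^sup>2 / 2 \<partial>M) = (\<integral>\<omega>. (z \<omega>)\<^sup>2 / 2 \<partial>M)"
proof -
  note z = integrable_bounded_pair(1,2)[OF bounded indep_var_rv1[OF indep] indep_var_rv2[OF indep]]
  note e = integrable_bounded_pair(3,4)[OF bounded indep_var_rv1[OF indep] indep_var_rv2[OF indep]]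
  have ze: "integrable M (\<lambda>\<omega>. z \<omega> * e \<omega>)" "(\<integral>\<omega>. z \<omega> * e \<omega> \<partial>M) = 0"
    using indep_var_integrable[OF indep z(1) e(1)] indep_var_lebesgue_integral[OF indep z(1) e(1)]
      centered by simp_all
  have "(\<lambda>\<omega>. (z \<omega> - e \<omega>)\<^sup>2 / 2) = (\<lambda>\<omega>. (z \<omega>)\<^sup>2 / 2 + (e \<omega>)\<^sup>2 / 2 - z \<omega> * e \<omega>)"
    by (simp add: power2_diff field_simps)
  then show ?thesis
    using z e ze by simp
qed

lemma (in prob_space) huber_increment_integral_ge:
  fixes z e c :: "'a \<Rightarrow> real"
  assumes indep: "\<And>f g. (f :: real \<Rightarrow> real) \<in> borel_measurable borel \<Longrightarrow>
      (g :: real \<times> real \<Rightarrow> real) \<in> borel_measurable (borel \<Otimes>\<^sub>M borel) \<Longrightarrow>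
      indep_var borel (\<lambda>\<omega>. f (z \<omega>)) borel (\<lambda>\<omega>. g (e \<omega>, c \<omega>))"
    and bounded: "AE \<omega> in M. \<bar>z \<omega>\<bar> + \<bar>e \<omega>\<bar> \<le> R"
    and centered: "expectation z = 0"
    and c: "integrable M c"
  shows "prob {\<omega> \<in> space M. c \<omega> = 0} * (\<integral>\<omega>. (z \<omega>)\<^sup>2 / 2 \<partial>M)
    \<le> (\<integral>\<omega>. huber R (z \<omega> - e \<omega> - c \<omega>) \<partial>M) - (\<integral>\<omega>. huber R (- (e \<omega> + c \<omega>)) \<partial>M)"
proof -
  define ind where "ind \<omega> = (if c \<omega> = 0 then 1 else 0 :: real)" for \<omega>
  define slope where "slope \<omega> = clip R (e \<omega> + c \<omega>)" for \<omega>
  have "AE \<omega> in M. 0 \<le> R" using bounded by eventually_elim linarith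
  then have "0 \<le> R" by simp
  have "indep_var borel z borel e" using indep[of "\<lambda>x. x" fst] by simp
  then have rv[measurable]: "random_variable borel z" "random_variable borel e"
    using indep_var_rv1 indep_var_rv2 by auto
  note z = integrable_bounded_pair(1,2)[OF bounded rv] and e = integrable_bounded_pair(3)[OF bounded rv]
  have [measurable]: "c \<in> borel_measurable M" using c by simp
  have ind: "integrable M ind"
    unfolding ind_def by (rule integrable_bounded(1)[of _ 1]) (simp, measurable)
  have slope: "integrable M slope"
    unfolding slope_def by (rule integrable_bounded(1)[of _ R]) (simp add: abs_clip_le \<open>0 \<le> R\<close>, measurable)
  have "indep_var borel (\<lambda>\<omega>. (z \<omega>)\<^sup>2) borel ind"
    unfolding ind_def using indep[of "\<lambda>x. x\<^sup>2" "\<lambda>p. if snd p = 0 then 1 else 0"] by simp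
  then have z2_ind: "integrable M (\<lambda>\<omega>. (z \<omega>)\<^sup>2 * ind \<omega>)"
      "(\<integral>\<omega>. (z \<omega>)\<^sup>2 * ind \<omega> \<partial>M) = (\<integral>\<omega>. (z \<omega>)\<^sup>2 \<partial>M) * prob {\<omega> \<in> space M. c \<omega> = 0}"
    using indep_var_integrable[OF _ z(2) ind] indep_var_lebesgue_integral[OF _ z(2) ind]
    by (simp_all add: ind_def expectation_if_one_zero)
  have "indep_var borel z borel slope"
    unfolding slope_def using indep[of "\<lambda>x. x" "\<lambda>p. clip R (fst p + snd p)"] by simp
  then have z_slope: "integrable M (\<lambda>\<omega>. z \<omega> * slope \<omega>)" "(\<integral>\<omega>. z \<omega> * slope \<omega> \<partial>M) = 0"
    using indep_var_integrable[OF _ z(1) slope] indep_var_lebesgue_integral[OF _ z(1) slope] centered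
    by simp_all
  have huber_terms: "integrable M (\<lambda>\<omega>. huber R (z \<omega> - e \<omega> - c \<omega>))"
      "integrable M (\<lambda>\<omega>. huber R (- (e \<omega> + c \<omega>)))"
    using z e c \<open>0 \<le> R\<close> by (auto intro!: integrable_huber)
  have "prob {\<omega> \<in> space M. c \<omega> = 0} * (\<integral>\<omega>. (z \<omega>)\<^sup>2 / 2 \<partial>M)
      = (\<integral>\<omega>. (z \<omega>)\<^sup>2 * ind \<omega> / 2 - z \<omega> * slope \<omega> \<partial>M)"
    using z2_ind z_slope by simp
  also have "\<dots> \<le> (\<integral>\<omega>. huber R (z \<omega> - e \<omega> - c \<omega>) - huber R (- (e \<omega> + c \<omega>)) \<partial>M)"
  proof (rule integral_mono_AE)
    show "AE \<omega> in M. (z \<omega>)\<^sup>2 * ind \<omega> / 2 - z \<omega> * slope \<omega>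
        \<le> huber R (z \<omega> - e \<omega> - c \<omega>) - huber R (- (e \<omega> + c \<omega>))"
      using bounded
    proof eventually_elim
      case (elim \<omega>)
      show ?case
        using huber_increment_ge[OF elim, of "c \<omega>"] by (cases "c \<omega> = 0") (simp_all add: ind_def slope_def)
    qed
  qed (use z2_ind z_slope huber_terms in auto)
  also have "\<dots> = (\<integral>\<omega>. huber R (z \<omega> - e \<omega> - c \<omega>) \<partial>M) - (\<integral>\<omega>. huber R (- (e \<omega> + c \<omega>)) \<partial>M)"
    using huber_terms by (rule Bochner_Integration.integral_diff)
  finally show ?thesis .
qed

lemma sq_risk_excess_eq:
  "sq_risk M X eps wstar w - sq_risk M X eps wstar wstar
     = (\<integral>\<omega>. ((w - wstar) \<bullet> X \<omega> - eps \<omega>)\<^sup>2 / 2 \<partial>M) - (\<integral>\<omega>. (eps \<omega>)\<^sup>2 / 2 \<partial>M)"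
  by (simp add: sq_risk_def inner_diff_left)

lemma huber_risk_excess_eq:
  "huber_risk M X eps b wstar R w - huber_risk M X eps b wstar R wstar
     = (\<integral>\<omega>. huber R ((w - wstar) \<bullet> X \<omega> - eps \<omega> - b \<omega>) \<partial>M)
       - (\<integral>\<omega>. huber R (- (eps \<omega> + b \<omega>)) \<partial>M)"
  unfolding huber_risk_def
  by (intro arg_cong2[where f = "(-)"] Bochner_Integration.integral_cong)
     (simp_all add: algebra_simps)

theorem lemma2:
  fixes M :: "'a measure"
    and X :: "'a \<Rightarrow> 'd::euclidean_space"
    and eps b :: "'a \<Rightarrow> real"
    and wstar w :: 'd
    and D \<sigma> \<alpha> :: real
  assumes "prob_space M"
    and "D > 0" and "\<sigma> \<ge> 0" and "0 \<le> \<alpha>" and "\<alpha> < 1"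
    and "norm wstar \<le> D"
    and "X \<in> borel_measurable M" and "eps \<in> borel_measurable M" and "b \<in> borel_measurable M"
    and "prob_space.indep_sets M
           (\<lambda>i::nat. if i = 0 then {X -` A \<inter> space M | A. A \<in> sets borel}
                      else if i = 1 then {eps -` A \<inter> space M | A. A \<in> sets borel}
                      else {b -` A \<inter> space M | A. A \<in> sets borel}) {0, 1, 2}"
    and "AE \<omega> in M. norm (X \<omega>) \<le> 1"
    and "(\<integral>\<omega>. X \<omega> \<partial>M) = 0"
    and "AE \<omega> in M. \<bar>eps \<omega>\<bar> \<le> \<sigma>"
    and "(\<integral>\<omega>. eps \<omega> \<partial>M) = 0"
    and "measure M {\<omega> \<in> space M. b \<omega> \<noteq> 0} = \<alpha>"
    and "integrable M b"
    and "norm w \<le> D"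
  shows "sq_risk M X eps wstar w - sq_risk M X eps wstar wstar
           \<le> (1 / (1 - \<alpha>)) * (huber_risk M X eps b wstar (6 * D + \<sigma>) w
                               - huber_risk M X eps b wstar (6 * D + \<sigma>) wstar)"
proof -
  interpret prob_space M by fact
  define R where "R = 6 * D + \<sigma>"
  define z where "z \<omega> = (w - wstar) \<bullet> X \<omega>" for \<omega>
  have indep: "indep_var borel (\<lambda>\<omega>. f (z \<omega>)) borel (\<lambda>\<omega>. g (eps \<omega>, b \<omega>))"
    if "f \<in> borel_measurable borel" "g \<in> borel_measurable (borel \<Otimes>\<^sub>M borel)"
    for f :: "real \<Rightarrow> real" and g :: "real \<times> real \<Rightarrow> real"
    unfolding z_def using that assms(7-10)
    by (intro indep_var_compose_Pair_of_indep_sets[where f = "\<lambda>x. f ((w - wstar) \<bullet> x)"]) auto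
  have "norm (w - wstar) \<le> 2 * D"
    using assms(6,17) norm_triangle_ineq4[of w wstar] by linarith
  then have z_le: "\<bar>z \<omega>\<bar> \<le> 2 * D" if "norm (X \<omega>) \<le> 1" for \<omega>
    unfolding z_def using abs_inner_le_mult that by fastforce
  have bounded: "AE \<omega> in M. \<bar>z \<omega>\<bar> + \<bar>eps \<omega>\<bar> \<le> R"
    using assms(11,13) unfolding R_def by eventually_elim (smt (verit) z_le assms(2))
  have "integrable M X"
    using assms(7,11) by (intro integrable_const_bound[of _ 1]) auto
  then have centered: "expectation z = 0"
    using assms(12) by (simp add: z_def[abs_def])
  have "{\<omega> \<in> space M. b \<omega> \<noteq> 0} \<in> events"
    using assms(9) by measurable
  then have "prob {\<omega> \<in> space M. b \<omega> = 0} = 1 - \<alpha>"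
    using prob_neg[of "\<lambda>\<omega>. b \<omega> \<noteq> 0"] assms(15) by simp
  with huber_increment_integral_ge[OF indep bounded centered assms(16)]
  have huber_excess: "(1 - \<alpha>) * (\<integral>\<omega>. (z \<omega>)\<^sup>2 / 2 \<partial>M)
      \<le> huber_risk M X eps b wstar R w - huber_risk M X eps b wstar R wstar"
    unfolding huber_risk_excess_eq z_def by (simp only:)
  have sq_excess: "sq_risk M X eps wstar w - sq_risk M X eps wstar wstar = (\<integral>\<omega>. (z \<omega>)\<^sup>2 / 2 \<partial>M)"
    using integral_sq_diff_centered_indep[OF _ bounded centered] indep[of "\<lambda>x. x" fst]
    unfolding sq_risk_excess_eq z_def by simp
  have "0 < 1 - \<alpha>" using assms(5) by simp
  with huber_excess[folded sq_excess] show ?thesis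
    by (simp add: R_def pos_le_divide_eq mult.commute)
qed

end
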